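(* Let $X$ be a topological space. The following are equivalent: (1) $X$ is a Baire space; (2) every cliquish function $f\colon X\to\mathbb R$ is pointwise discontinuous. Moreover, if $X$ is perfectly normal, (1) and (2) are equivalent to: (3) every function $f\colon X\to\mathbb R$ with the Lebesgue property is pointwise discontinuous.
   Context: A topological space is Baire if every nonempty open subset of it is nonmeager in it. For $f\colon X\to\mathbb R$: $f$ is cliquish if for every $\varepsilon>0$ and every nonempty open $U\subseteq X$ there is a nonempty open $O\subseteq U$ with $\operatorname{diam} f(O)<\varepsilon$; $f$ is pointwise discontinuous if the set of continuity points of $f$ is dense in $X$; $f$ has the Lebesgue property if for every $\varepsilon>0$ there are closed sets $X_n$ ($n\in\mathbb N$) with $X=\bigcup_n X_n$ and $\operatorname{diam} f(X_n)\le\varepsilon$ for all $n$. *)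

theory Defs
  imports "HOL-Analysis.Analysis"
begin

definition nowhere_dense_in :: "'a topology \<Rightarrow> 'a set \<Rightarrow> bool" where
  "nowhere_dense_in X S \<longleftrightarrow> S \<subseteq> topspace X \<and> X interior_of (X closure_of S) = {}"

definition meager_in :: "'a topology \<Rightarrow> 'a set \<Rightarrow> bool" where
  "meager_in X S \<longleftrightarrow> (\<exists>N :: nat \<Rightarrow> 'a set. (\<forall>n. nowhere_dense_in X (N n)) \<and> S \<subseteq> (\<Union>n. N n))"

definition baire_space :: "'a topology \<Rightarrow> bool" where
  "baire_space X \<longleftrightarrow> (\<forall>U. openin X U \<and> U \<noteq> {} \<longrightarrow> \<not> meager_in X U)"

definition perfectly_normal_space :: "'a topology \<Rightarrow> bool" where
  "perfectly_normal_space X \<longleftrightarrow> normal_space X \<and> (\<forall>C. closedin X C \<longrightarrow> gdelta_in X C)"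

text \<open>diam f(O) < eps, with diam of an unbounded set being infinite\<close>
definition cliquish :: "'a topology \<Rightarrow> ('a \<Rightarrow> real) \<Rightarrow> bool" where
  "cliquish X f \<longleftrightarrow>
     (\<forall>\<epsilon>>0. \<forall>U. openin X U \<and> U \<noteq> {} \<longrightarrow>
        (\<exists>V. openin X V \<and> V \<noteq> {} \<and> V \<subseteq> U \<and> bounded (f ` V) \<and> diameter (f ` V) < \<epsilon>))"

definition pointwise_discontinuous :: "'a topology \<Rightarrow> ('a \<Rightarrow> real) \<Rightarrow> bool" where
  "pointwise_discontinuous X f \<longleftrightarrow>
     X closure_of {x \<in> topspace X. topcontinuous_at X euclideanreal f x} = topspace X"

definition lebesgue_property :: "'a topology \<Rightarrow> ('a \<Rightarrow> real) \<Rightarrow> bool" where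
  "lebesgue_property X f \<longleftrightarrow>
     (\<forall>\<epsilon>>0. \<exists>C :: nat \<Rightarrow> 'a set. (\<forall>n. closedin X (C n)) \<and> topspace X = (\<Union>n. C n) \<and>
        (\<forall>n. bounded (f ` C n) \<and> diameter (f ` C n) \<le> \<epsilon>))"

end

theory Submission
  imports Defs
begin

text \<open>
  For a cliquish function the points having no neighbourhood of oscillation below \<open>1/(n+1)\<close>
  form closed nowhere dense sets, so its discontinuities are meager, and in a Baire space its
  continuity points are dense. A function with the Lebesgue property is cliquish in a Baire
  space, because any nonempty open set covered by countably many closed sets of small
  oscillation contains a nonempty open subset of one of them.

  Conversely, if a nonempty open set \<open>U\<close> is covered by closed nowhere dense sets
  \<open>F\<^sub>0, F\<^sub>1, \<dots>\<close>, let \<open>f\<close> be \<open>2\<^sup>-\<^sup>n\<close> on \<open>F\<^sub>n\<close> minus the earlier \<open>F\<^sub>k\<close> and \<open>0\<close> off their union.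
  Every open set contains an open set avoiding \<open>F\<^sub>0, \<dots>, F\<^sub>M\<close>, where \<open>f \<le> 2\<^sup>-\<^sup>M\<close>; hence \<open>f\<close> is
  cliquish but discontinuous at every point of \<open>U\<close>. If closed sets are \<open>G\<^sub>\<delta>\<close>, the sets
  \<open>F\<^sub>n\<close> minus the earlier \<open>F\<^sub>k\<close> are \<open>F\<^sub>\<sigma>\<close> and \<open>f\<close> is constant on each of them, which gives
  \<open>f\<close> the Lebesgue property.
\<close>

lemma meager_in_subset: "meager_in X T \<Longrightarrow> S \<subseteq> T \<Longrightarrow> meager_in X S"
  unfolding meager_in_def by blast

lemma nowhere_dense_in_closedin_iff:
  "closedin X S \<Longrightarrow> nowhere_dense_in X S \<longleftrightarrow> X interior_of S = {}"
  by (simp add: nowhere_dense_in_def closure_of_closedin closedin_subset)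

lemma not_baire_space_closed_cover:
  assumes "\<not> baire_space X"
  obtains F :: "nat \<Rightarrow> 'a set" and U
  where "\<And>n. closedin X (F n)" "\<And>n. X interior_of F n = {}"
    and "openin X U" "U \<noteq> {}" "U \<subseteq> (\<Union>n. F n)"
proof -
  obtain U where U: "openin X U" "U \<noteq> {}" "meager_in X U"
    using assms unfolding baire_space_def by blast
  then obtain N :: "nat \<Rightarrow> 'a set" where N: "\<And>n. nowhere_dense_in X (N n)"
    and cover: "U \<subseteq> (\<Union>n. N n)"
    unfolding meager_in_def by blast
  have "U \<subseteq> (\<Union>n. X closure_of N n)"
  proof
    fix x assume "x \<in> U"
    then obtain n where "x \<in> N n"
      using cover by blast
    moreover have "N n \<subseteq> X closure_of N n"
      using N by (simp add: nowhere_dense_in_def closure_of_subset)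
    ultimately show "x \<in> (\<Union>n. X closure_of N n)"
      by blast
  qed
  moreover have "X interior_of (X closure_of N n) = {}" for n
    using N by (simp add: nowhere_dense_in_def)
  ultimately show thesis
    using U by (intro that[of "\<lambda>n. X closure_of N n" U]) auto
qed

lemma baire_space_closure_of_eq_topspace:
  assumes "baire_space X" "meager_in X (topspace X - S)"
  shows "X closure_of S = topspace X"
  unfolding dense_intersects_open
proof (intro allI impI)
  fix T assume T: "openin X T \<and> T \<noteq> {}"
  show "S \<inter> T \<noteq> {}"
  proof
    assume "S \<inter> T = {}"
    then have "T \<subseteq> topspace X - S"
      using T openin_subset by blast
    then have "meager_in X T"
      using assms(2) meager_in_subset by blast
    then show False
      using assms(1) T by (simp add: baire_space_def)
  qed
qed

lemma baire_space_closed_cover_contains_open: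
  fixes C :: "nat \<Rightarrow> 'a set"
  assumes "baire_space X" "openin X W" "W \<noteq> {}"
    and closed: "\<And>n. closedin X (C n)" and cover: "W \<subseteq> (\<Union>n. C n)"
  obtains n V where "openin X V" "V \<noteq> {}" "V \<subseteq> W \<inter> C n"
proof (rule ccontr)
  assume no_open: "\<not> thesis"
  have "nowhere_dense_in X (W \<inter> C n)" for n
  proof -
    let ?I = "X interior_of (X closure_of (W \<inter> C n))"
    have "X closure_of (W \<inter> C n) \<subseteq> C n"
      by (rule closure_of_minimal) (auto intro: closed)
    moreover have "X closure_of (W \<inter> C n) \<subseteq> X closure_of W"
      by (rule closure_of_mono) auto
    moreover have "?I \<subseteq> X closure_of (W \<inter> C n)"
      by (rule interior_of_subset)
    ultimately have I_sub: "?I \<subseteq> X closure_of W \<inter> C n"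
      by blast
    have "?I \<inter> W = {} \<longleftrightarrow> ?I \<inter> X closure_of W = {}"
      by (simp add: openin_Int_closure_of_eq_empty)
    with I_sub have I_meets_W: "?I \<inter> W = {} \<longleftrightarrow> ?I = {}"
      by (simp add: Int_absorb2)
    have "openin X (?I \<inter> W)"
      using assms(2) by (intro openin_Int openin_interior_of)
    moreover have "?I \<inter> W \<subseteq> W \<inter> C n"
      using I_sub by blast
    ultimately have "?I \<inter> W = {}"
      using that[of "?I \<inter> W" n] no_open by blast
    then have "?I = {}"
      using I_meets_W by simp
    then show ?thesis
      using openin_subset[OF assms(2)] by (auto simp: nowhere_dense_in_def)
  qed
  then have "meager_in X W"
    unfolding meager_in_def using cover by (intro exI[of _ "\<lambda>n. W \<inter> C n"]) auto
  then show False
    using assms(1-3) by (simp add: baire_space_def)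
qed

definition small_oscillation_set :: "'a topology \<Rightarrow> ('a \<Rightarrow> real) \<Rightarrow> real \<Rightarrow> 'a set" where
  "small_oscillation_set X f \<epsilon> = \<Union>{V. openin X V \<and> bounded (f ` V) \<and> diameter (f ` V) < \<epsilon>}"

lemma openin_small_oscillation_set: "openin X (small_oscillation_set X f \<epsilon>)"
  unfolding small_oscillation_set_def by (rule openin_Union) auto

lemma small_oscillation_set_mono:
  "\<epsilon> \<le> \<delta> \<Longrightarrow> small_oscillation_set X f \<epsilon> \<subseteq> small_oscillation_set X f \<delta>"
  unfolding small_oscillation_set_def by auto

lemma cliquish_nowhere_dense_oscillation:
  assumes "cliquish X f" "\<epsilon> > 0"
  shows "nowhere_dense_in X (topspace X - small_oscillation_set X f \<epsilon>)"
proof -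
  let ?G = "small_oscillation_set X f \<epsilon>"
  have "X interior_of (topspace X - ?G) = {}"
    unfolding interior_of_eq_empty_alt
  proof (intro allI impI)
    fix W assume W: "openin X W \<and> W \<noteq> {}"
    obtain V where V: "openin X V" "V \<noteq> {}" "V \<subseteq> W" "bounded (f ` V)" "diameter (f ` V) < \<epsilon>"
      using assms(1)[unfolded cliquish_def, rule_format, OF assms(2) W] by blast
    then have "V \<subseteq> ?G"
      unfolding small_oscillation_set_def by blast
    then show "W - (topspace X - ?G) \<noteq> {}"
      using V(2,3) by blast
  qed
  then show ?thesis
    by (simp add: nowhere_dense_in_closedin_iff closedin_diff openin_small_oscillation_set)
qed

lemma topcontinuous_at_if_small_oscillation:
  assumes "x \<in> topspace X" "\<And>\<epsilon>. \<epsilon> > 0 \<Longrightarrow> x \<in> small_oscillation_set X f \<epsilon>"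
  shows "topcontinuous_at X euclideanreal f x"
  unfolding topcontinuous_at_def
proof (intro conjI allI impI)
  show "x \<in> topspace X" "f \<in> topspace X \<rightarrow> topspace euclideanreal"
    using assms(1) by auto
  fix T :: "real set" assume "openin euclideanreal T \<and> f x \<in> T"
  then obtain \<epsilon> where \<epsilon>: "\<epsilon> > 0" "ball (f x) \<epsilon> \<subseteq> T"
    using open_contains_ball by force
  then obtain V where V: "openin X V" "x \<in> V" "bounded (f ` V)" "diameter (f ` V) < \<epsilon>"
    using assms(2) unfolding small_oscillation_set_def by blast
  have "f y \<in> T" if "y \<in> V" for y
  proof -
    have "dist (f x) (f y) \<le> diameter (f ` V)"
      using V that by (intro diameter_bounded_bound) auto
    then show ?thesis
      using V(4) \<epsilon>(2) by auto
  qed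
  then show "\<exists>U. openin X U \<and> x \<in> U \<and> (\<forall>y\<in>U. f y \<in> T)"
    using V(1,2) by blast
qed

lemma cliquish_meager_discontinuities:
  assumes "cliquish X f"
  shows "meager_in X (topspace X - {x \<in> topspace X. topcontinuous_at X euclideanreal f x})"
proof -
  define N where "N n = topspace X - small_oscillation_set X f (inverse (Suc n))" for n :: nat
  have "x \<in> (\<Union>n. N n)"
    if x: "x \<in> topspace X" and discontinuous: "\<not> topcontinuous_at X euclideanreal f x" for x
  proof -
    obtain \<epsilon> where \<epsilon>: "\<epsilon> > 0" "x \<notin> small_oscillation_set X f \<epsilon>"
      using topcontinuous_at_if_small_oscillation[OF x] discontinuous by blast
    then obtain n where "inverse (Suc n) < \<epsilon>"
      using reals_Archimedean by blast
    then have "x \<notin> small_oscillation_set X f (inverse (Suc n))"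
      using \<epsilon>(2) small_oscillation_set_mono[of "inverse (Suc n)" \<epsilon> X f] by auto
    then show ?thesis
      using x unfolding N_def by blast
  qed
  moreover have "nowhere_dense_in X (N n)" for n
    unfolding N_def by (rule cliquish_nowhere_dense_oscillation[OF assms]) simp
  ultimately show ?thesis
    unfolding meager_in_def by (intro exI[of _ N]) auto
qed

theorem baire_space_cliquish_imp_pointwise_discontinuous:
  "baire_space X \<Longrightarrow> cliquish X f \<Longrightarrow> pointwise_discontinuous X f"
  unfolding pointwise_discontinuous_def
  by (intro baire_space_closure_of_eq_topspace cliquish_meager_discontinuities)

lemma bounded_diameter_subset_interval:
  fixes S :: "real set"
  assumes "S \<subseteq> {a..b}" "a \<le> b"
  shows "bounded S \<and> diameter S \<le> b - a"
  using assms bounded_subset[OF bounded_closed_interval] diameter_subset[OF assms(1)] by auto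

lemma bounded_diameter_subset:
  fixes S T :: "'a::metric_space set"
  assumes "S \<subseteq> T" "bounded T" "diameter T \<le> d"
  shows "bounded S \<and> diameter S \<le> d"
  using bounded_subset[OF assms(2,1)] diameter_subset[OF assms(1,2)] assms(3) by simp

lemma baire_space_lebesgue_property_imp_cliquish:
  assumes "baire_space X" "lebesgue_property X f"
  shows "cliquish X f"
  unfolding cliquish_def
proof (intro allI impI)
  fix \<epsilon> :: real and W assume \<epsilon>: "\<epsilon> > 0" and W: "openin X W \<and> W \<noteq> {}"
  have "\<epsilon> / 2 > 0"
    using \<epsilon> by simp
  from assms(2)[unfolded lebesgue_property_def, rule_format, OF this]
  obtain C :: "nat \<Rightarrow> 'a set" where C: "\<And>n. closedin X (C n)" "topspace X = (\<Union>n. C n)"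
    and small: "\<And>n. bounded (f ` C n) \<and> diameter (f ` C n) \<le> \<epsilon> / 2"
    by blast
  have W_open: "openin X W" and W_ne: "W \<noteq> {}"
    using W by auto
  have "W \<subseteq> (\<Union>n. C n)"
    using openin_subset[OF W_open] C(2) by simp
  then obtain n V where V: "openin X V" "V \<noteq> {}" "V \<subseteq> W \<inter> C n"
    by (rule baire_space_closed_cover_contains_open[OF assms(1) W_open W_ne C(1)])
  have "bounded (f ` V) \<and> diameter (f ` V) \<le> \<epsilon> / 2"
    using V(3) small[of n] by (intro bounded_diameter_subset[of _ "f ` C n"]) auto
  then show "\<exists>V. openin X V \<and> V \<noteq> {} \<and> V \<subseteq> W \<and> bounded (f ` V) \<and> diameter (f ` V) < \<epsilon>"
    using V \<epsilon> by (intro exI[of _ V]) auto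
qed

lemma interior_of_UN_lessThan_eq_empty:
  fixes F :: "nat \<Rightarrow> 'a set"
  assumes "\<And>k. k < n \<Longrightarrow> closedin X (F k)" "\<And>k. k < n \<Longrightarrow> X interior_of F k = {}"
  shows "X interior_of (\<Union>k<n. F k) = {}"
  using assms
proof (induction n)
  case 0
  then show ?case by simp
next
  case (Suc n)
  have "(\<Union>k<Suc n. F k) = F n \<union> (\<Union>k<n. F k)"
    by (simp add: lessThan_Suc)
  then show ?case
    using Suc by (simp add: interior_of_union_eq_empty)
qed

lemma openin_diff_closed_nowhere_dense:
  fixes F :: "nat \<Rightarrow> 'a set"
  assumes "openin X W" "W \<noteq> {}"
    and "\<And>k. closedin X (F k)" "\<And>k. X interior_of F k = {}"
  shows "openin X (W - (\<Union>k<n. F k)) \<and> W - (\<Union>k<n. F k) \<noteq> {}"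
proof
  show "openin X (W - (\<Union>k<n. F k))"
    using assms(1,3) by (intro openin_diff closedin_Union) auto
  have "X interior_of (\<Union>k<n. F k) = {}"
    using assms(3,4) by (rule interior_of_UN_lessThan_eq_empty)
  then show "W - (\<Union>k<n. F k) \<noteq> {}"
    using assms(1,2) by (simp add: interior_of_eq_empty_alt)
qed

lemma obtain_least_index:
  fixes F :: "nat \<Rightarrow> 'a set"
  assumes "x \<in> F n"
  obtains m where "m \<le> n" "x \<in> F m" "\<And>k. k < m \<Longrightarrow> x \<notin> F k"
proof
  show "(LEAST m. x \<in> F m) \<le> n"
    using assms by (rule Least_le)
  show "x \<in> F (LEAST m. x \<in> F m)"
    using assms by (rule LeastI)
  show "x \<notin> F k" if "k < (LEAST m. x \<in> F m)" for k
    using not_less_Least[OF that] .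
qed

definition first_hit_weight :: "(nat \<Rightarrow> 'a set) \<Rightarrow> 'a \<Rightarrow> real" where
  "first_hit_weight F x = (if \<exists>n. x \<in> F n then (1/2) ^ (LEAST n. x \<in> F n) else 0)"

lemma first_hit_weight_eq:
  assumes "x \<in> F m" "\<And>k. k < m \<Longrightarrow> x \<notin> F k"
  shows "first_hit_weight F x = (1/2) ^ m"
proof -
  have "(LEAST n. x \<in> F n) = m"
    using assms by (intro Least_equality) (auto simp: not_le[symmetric])
  then show ?thesis
    using assms(1) by (auto simp: first_hit_weight_def)
qed

lemma first_hit_weight_bounds:
  assumes "\<And>k. k < n \<Longrightarrow> x \<notin> F k"
  shows "first_hit_weight F x \<in> {0..(1/2) ^ n}"
proof (cases "\<exists>j. x \<in> F j")
  case True
  then obtain j where "x \<in> F j"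
    by blast
  then obtain m where m: "x \<in> F m" "\<And>k. k < m \<Longrightarrow> x \<notin> F k"
    by (rule obtain_least_index) blast
  then have "first_hit_weight F x = (1/2) ^ m"
    by (rule first_hit_weight_eq)
  moreover have "n \<le> m"
    using assms[of m] m(1) by (metis leI)
  ultimately show ?thesis
    by (simp add: power_decreasing)
next
  case False
  then show ?thesis
    by (simp add: first_hit_weight_def)
qed

lemma cliquish_first_hit_weight:
  assumes "\<And>n. closedin X (F n)" "\<And>n. X interior_of F n = {}"
  shows "cliquish X (first_hit_weight F)"
  unfolding cliquish_def
proof (intro allI impI)
  fix \<epsilon> :: real and W assume \<epsilon>: "\<epsilon> > 0" and W: "openin X W \<and> W \<noteq> {}"
  obtain M where M: "(1/2::real) ^ M < \<epsilon>"
    using real_arch_pow_inv[OF \<epsilon>, of "1/2"] by auto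
  define V where "V = W - (\<Union>k<M. F k)"
  have V: "openin X V \<and> V \<noteq> {}"
    unfolding V_def using W by (intro openin_diff_closed_nowhere_dense assms) auto
  have "first_hit_weight F ` V \<subseteq> {0..(1/2) ^ M}"
  proof
    fix z assume "z \<in> first_hit_weight F ` V"
    then obtain y where "z = first_hit_weight F y" "\<And>k. k < M \<Longrightarrow> y \<notin> F k"
      unfolding V_def by blast
    then show "z \<in> {0..(1/2) ^ M}"
      using first_hit_weight_bounds[of M y F] by simp
  qed
  then have "bounded (first_hit_weight F ` V) \<and> diameter (first_hit_weight F ` V) \<le> (1/2) ^ M - 0"
    by (rule bounded_diameter_subset_interval) simp
  then show "\<exists>V. openin X V \<and> V \<noteq> {} \<and> V \<subseteq> W \<and>
      bounded (first_hit_weight F ` V) \<and> diameter (first_hit_weight F ` V) < \<epsilon>"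
    using V M by (intro exI[of _ V]) (auto simp: V_def)
qed

lemma first_hit_weight_discontinuous:
  assumes "\<And>n. closedin X (F n)" "\<And>n. X interior_of F n = {}" "x \<in> F n"
  shows "\<not> topcontinuous_at X euclideanreal (first_hit_weight F) x"
proof
  let ?w = "first_hit_weight F"
  obtain m where "x \<in> F m" "\<And>k. k < m \<Longrightarrow> x \<notin> F k"
    using assms(3) by (rule obtain_least_index) blast
  then have w_x: "?w x = (1/2) ^ m"
    by (rule first_hit_weight_eq)
  let ?B = "ball (?w x) ((1/2) ^ Suc m)"
  assume "topcontinuous_at X euclideanreal ?w x"
  moreover have "openin euclideanreal ?B" "?w x \<in> ?B"
    by auto
  ultimately obtain U where U: "openin X U" "x \<in> U" "\<forall>y\<in>U. ?w y \<in> ?B"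
    unfolding topcontinuous_at_def by blast
  have "openin X (U - (\<Union>k<Suc m. F k)) \<and> U - (\<Union>k<Suc m. F k) \<noteq> {}"
    using U(1,2) by (intro openin_diff_closed_nowhere_dense assms(1,2)) auto
  then obtain y where y: "y \<in> U" "\<And>k. k < Suc m \<Longrightarrow> y \<notin> F k"
    by blast
  have half: "(1/2::real) ^ Suc m = (1/2) ^ m / 2"
    by simp
  have "?w y \<le> (1/2) ^ m / 2"
    using first_hit_weight_bounds[of "Suc m" y F] y(2) half by simp
  moreover have "dist (?w x) (?w y) < (1/2) ^ m / 2"
    using U(3) y(1) half by simp
  moreover have "(1/2) ^ m - ?w y \<le> dist (?w x) (?w y)"
    unfolding dist_real_def w_x by (rule abs_ge_self)
  ultimately show False
    by linarith
qed

lemma first_hit_weight_not_pointwise_discontinuous: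
  assumes "\<And>n. closedin X (F n)" "\<And>n. X interior_of F n = {}"
    and "openin X U" "U \<noteq> {}" "U \<subseteq> (\<Union>n. F n)"
  shows "\<not> pointwise_discontinuous X (first_hit_weight F)"
proof -
  have "{x \<in> topspace X. topcontinuous_at X euclideanreal (first_hit_weight F) x} \<inter> U = {}"
  proof (rule equals0I)
    fix x assume x: "x \<in> {x \<in> topspace X. topcontinuous_at X euclideanreal (first_hit_weight F) x} \<inter> U"
    then obtain n where "x \<in> F n"
      using assms(5) by blast
    then have "\<not> topcontinuous_at X euclideanreal (first_hit_weight F) x"
      by (rule first_hit_weight_discontinuous[OF assms(1,2)])
    then show False
      using x by blast
  qed
  then show ?thesis
    unfolding pointwise_discontinuous_def dense_intersects_open using assms(3,4) by blast
qed

lemma baire_space_if_first_hit_weights_pointwise_discontinuous: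
  fixes X :: "'a topology"
  assumes "\<And>F. \<lbrakk>\<And>n. closedin X (F n); \<And>n. X interior_of F n = {}\<rbrakk>
             \<Longrightarrow> pointwise_discontinuous X (first_hit_weight F)"
  shows "baire_space X"
proof (rule ccontr)
  assume "\<not> baire_space X"
  then show False
  proof (rule not_baire_space_closed_cover)
    fix F :: "nat \<Rightarrow> 'a set" and U
    assume F: "\<And>n. closedin X (F n)" "\<And>n. X interior_of F n = {}"
      and U: "openin X U" "U \<noteq> {}" "U \<subseteq> (\<Union>n. F n)"
    show False
      using assms[of F] F first_hit_weight_not_pointwise_discontinuous[OF F U] by blast
  qed
qed

lemma lebesgue_property_fsigma_cover:
  assumes "\<And>\<epsilon>. \<epsilon> > 0 \<Longrightarrow> \<exists>S :: nat \<Rightarrow> 'a set. (\<forall>n. fsigma_in X (S n)) \<and> topspace X = (\<Union>n. S n)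
             \<and> (\<forall>n. bounded (f ` S n) \<and> diameter (f ` S n) \<le> \<epsilon>)"
  shows "lebesgue_property X f"
  unfolding lebesgue_property_def
proof (intro allI impI)
  fix \<epsilon> :: real assume "\<epsilon> > 0"
  then obtain S :: "nat \<Rightarrow> 'a set" where S: "\<And>n. fsigma_in X (S n)" "topspace X = (\<Union>n. S n)"
    and small: "\<And>n. bounded (f ` S n) \<and> diameter (f ` S n) \<le> \<epsilon>"
    using assms[of \<epsilon>] by blast
  have "\<exists>D. (\<forall>j. closedin X (D j)) \<and> (\<forall>j. D j \<subseteq> D (Suc j)) \<and> (\<Union>j. D j) = S n" for n
    using S(1)[of n] by (simp only: fsigma_in_ascending)
  then obtain D :: "nat \<Rightarrow> nat \<Rightarrow> 'a set"
    where D: "\<And>n j. closedin X (D n j)" "\<And>n. (\<Union>j. D n j) = S n"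
    by metis
  define C where "C i = (case prod_decode i of (n, j) \<Rightarrow> D n j)" for i
  have C_closed: "closedin X (C i)" for i
    unfolding C_def using D(1) by (simp split: prod.split)
  have C_sub: "C i \<subseteq> S (fst (prod_decode i))" for i
    unfolding C_def using D(2)[symmetric] by (auto split: prod.split)
  have "topspace X \<subseteq> (\<Union>i. C i)"
  proof
    fix x assume "x \<in> topspace X"
    then have "x \<in> (\<Union>n. \<Union>j. D n j)"
      using S(2) D(2) by simp
    then obtain n j where "x \<in> D n j"
      by blast
    then have "x \<in> C (prod_encode (n, j))"
      by (simp add: C_def)
    then show "x \<in> (\<Union>i. C i)"
      by blast
  qed
  moreover have "(\<Union>i. C i) \<subseteq> topspace X"
    by (simp add: UN_subset_iff closedin_subset[OF C_closed])
  moreover have "bounded (f ` C i) \<and> diameter (f ` C i) \<le> \<epsilon>" for i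
    using C_sub[of i] small by (intro bounded_diameter_subset[of _ "f ` S (fst (prod_decode i))"]) auto
  ultimately show "\<exists>C :: nat \<Rightarrow> 'a set. (\<forall>n. closedin X (C n)) \<and> topspace X = (\<Union>n. C n) \<and>
        (\<forall>n. bounded (f ` C n) \<and> diameter (f ` C n) \<le> \<epsilon>)"
    using C_closed by (intro exI[of _ C]) auto
qed

lemma lebesgue_property_first_hit_weight:
  assumes closed: "\<And>n. closedin X (F n)" and gdelta: "\<And>C. closedin X C \<Longrightarrow> gdelta_in X C"
  shows "lebesgue_property X (first_hit_weight F)"
proof (rule lebesgue_property_fsigma_cover)
  let ?w = "first_hit_weight F"
  fix \<epsilon> :: real assume \<epsilon>: "\<epsilon> > 0"
  obtain M where M: "(1/2::real) ^ M < \<epsilon>"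
    using real_arch_pow_inv[OF \<epsilon>, of "1/2"] by auto
  \<comment> \<open>for \<open>k \<ge> M\<close> all \<open>S k\<close> coincide with the set where the weight is at most \<open>2\<^sup>-\<^sup>M\<close>\<close>
  define S where "S k = (if k < M then F k else topspace X) - (\<Union>j<min k M. F j)" for k
  have "fsigma_in X (S k)" for k
    unfolding S_def using closed
    by (intro fsigma_in_diff closed_imp_fsigma_in gdelta closedin_Union) auto
  moreover have "topspace X = (\<Union>k. S k)"
  proof
    have "S k \<subseteq> topspace X" for k
      using closedin_subset[OF closed, of k] by (auto simp: S_def)
    then show "(\<Union>k. S k) \<subseteq> topspace X"
      by (simp add: UN_subset_iff)
    show "topspace X \<subseteq> (\<Union>k. S k)"
    proof
      fix x assume x: "x \<in> topspace X"
      show "x \<in> (\<Union>k. S k)"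
      proof (cases "\<exists>k<M. x \<in> F k")
        case True
        then obtain j where "j < M" "x \<in> F j"
          by blast
        then obtain k where "k < M" "x \<in> F k" "\<And>i. i < k \<Longrightarrow> x \<notin> F i"
          by (metis obtain_least_index le_less_trans)
        then have "x \<in> S k"
          by (simp add: S_def)
        then show ?thesis
          by blast
      next
        case False
        then have "x \<in> S M"
          using x by (simp add: S_def)
        then show ?thesis
          by blast
      qed
    qed
  qed
  moreover have "bounded (?w ` S k) \<and> diameter (?w ` S k) \<le> \<epsilon>" for k
  proof (cases "k < M")
    case True
    then have "?w ` S k \<subseteq> {(1/2) ^ k..(1/2) ^ k}"
      by (auto simp: S_def first_hit_weight_eq)
    then have "bounded (?w ` S k) \<and> diameter (?w ` S k) \<le> (1/2) ^ k - (1/2) ^ k"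
      by (rule bounded_diameter_subset_interval) simp
    then show ?thesis
      using \<epsilon> by simp
  next
    case False
    then have "?w ` S k \<subseteq> {0..(1/2) ^ M}"
      using first_hit_weight_bounds[of M _ F] by (auto simp: S_def)
    then have "bounded (?w ` S k) \<and> diameter (?w ` S k) \<le> (1/2) ^ M - 0"
      by (rule bounded_diameter_subset_interval) simp
    then show ?thesis
      using M by simp
  qed
  ultimately show "\<exists>S :: nat \<Rightarrow> 'a set. (\<forall>n. fsigma_in X (S n)) \<and> topspace X = (\<Union>n. S n)
      \<and> (\<forall>n. bounded (?w ` S n) \<and> diameter (?w ` S n) \<le> \<epsilon>)"
    by (intro exI[of _ S]) simp
qed

theorem proposition2p8:
  fixes X :: "'a topology"
  shows "(baire_space X \<longleftrightarrow> (\<forall>f :: 'a \<Rightarrow> real. cliquish X f \<longrightarrow> pointwise_discontinuous X f))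
       \<and> (perfectly_normal_space X \<longrightarrow>
           (baire_space X \<longleftrightarrow> (\<forall>f :: 'a \<Rightarrow> real. lebesgue_property X f \<longrightarrow> pointwise_discontinuous X f)))"
proof (intro conjI impI iffI allI)
  show "pointwise_discontinuous X f" if "baire_space X" "cliquish X f" for f :: "'a \<Rightarrow> real"
    using that by (rule baire_space_cliquish_imp_pointwise_discontinuous)
  show "pointwise_discontinuous X f" if "baire_space X" "lebesgue_property X f" for f :: "'a \<Rightarrow> real"
    using that by (intro baire_space_cliquish_imp_pointwise_discontinuous
        baire_space_lebesgue_property_imp_cliquish)
  show "baire_space X" if cliquish_pd: "\<forall>f :: 'a \<Rightarrow> real. cliquish X f \<longrightarrow> pointwise_discontinuous X f"
  proof (rule baire_space_if_first_hit_weights_pointwise_discontinuous)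
    fix F :: "nat \<Rightarrow> 'a set"
    assume "\<And>n. closedin X (F n)" "\<And>n. X interior_of F n = {}"
    then have "cliquish X (first_hit_weight F)"
      by (rule cliquish_first_hit_weight)
    then show "pointwise_discontinuous X (first_hit_weight F)"
      using cliquish_pd by blast
  qed
  show "baire_space X" if normal: "perfectly_normal_space X"
    and lebesgue_pd: "\<forall>f :: 'a \<Rightarrow> real. lebesgue_property X f \<longrightarrow> pointwise_discontinuous X f"
  proof (rule baire_space_if_first_hit_weights_pointwise_discontinuous)
    fix F :: "nat \<Rightarrow> 'a set"
    assume "\<And>n. closedin X (F n)" "\<And>n. X interior_of F n = {}"
    then have "lebesgue_property X (first_hit_weight F)"
      using normal unfolding perfectly_normal_space_def by (intro lebesgue_property_first_hit_weight) auto
    then show "pointwise_discontinuous X (first_hit_weight F)"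
      using lebesgue_pd by blast
  qed
qed

end
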